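(* For $\alpha\in\{1/4,-1/2\}$ and $j,k\in\mathbb{N}$ let $$\big(h_{\mathbb{N}}^{[\alpha]}\big)_{jk}=2^{1+2\alpha}\int_0^1\sin\Big(\frac{\pi x}{2}\Big)^{2\alpha}\sin(j\pi x)\sin(k\pi x)\,\mathrm{d}x.$$ Then for all $n\in\mathbb{N}$ and $j,k\in\{1,\dots,n\}$: (i) $\displaystyle\big(h_{\mathbb{N}}^{[1/4]}\big)_{jk}=\frac{1}{2\sqrt{2\pi}}\left(\frac{\Gamma(j+k-\frac14)}{\Gamma(j+k+\frac54)}-\frac{\Gamma(|j-k|-\frac14)}{\Gamma(|j-k|+\frac54)}\right)$; (ii) $\displaystyle\big(h_{\mathbb{N}}^{[-1/2]}\big)_{jk}=\frac1\pi\Big[\psi\big(j+k+\tfrac12\big)-\psi\big(|j-k|+\tfrac12\big)\Big]=\frac1\pi\sum_{l=|j-k|+1}^{j+k}\frac{2}{2l-1}$, where $\Gamma$ is the Gamma function and $\psi=\Gamma'/\Gamma$ is the digamma function. *)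

theory Defs
  imports "HOL-Analysis.Analysis"
begin

text \<open>The real power is taken with powr (sin(pi x/2) > 0 on (0,1]; the value at the
  single point x = 0 is irrelevant for the integral).\<close>
definition hN :: "real \<Rightarrow> nat \<Rightarrow> nat \<Rightarrow> real" where
  "hN \<alpha> j k = 2 powr (1 + 2 * \<alpha>) *
     integral {0..1} (\<lambda>x. sin (pi * x / 2) powr (2 * \<alpha>) * sin (real j * pi * x) * sin (real k * pi * x))"

end

theory Submission
  imports Defs
begin

text \<open>
  Write sin(j pi x) sin(k pi x) = (cos(m pi x) - cos(M pi x)) / 2 with m = |j - k| and M = j + k.
  For alpha = -1/2, dividing by sin(pi x / 2) telescopes this into the sum of sin((2l - 1) pi x / 2)
  over m < l <= M, whose integrals 2 / ((2l - 1) pi) are the increments of the digamma function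
  at half-integers. For alpha = 1/4 the entry is sqrt 2 (J m - J M) with the cosine coefficients
  J m of sqrt(sin(pi x / 2)) on [0, 1]. Differentiating sin(pi x / 2)^(3/2) cos((2m + 1) pi x / 2),
  which vanishes at both ends, gives (m + 5/4) J (m + 1) = (m - 1/4) J m, and the substitution
  t = sin(pi x / 2)^2 turns pi J 0 into the Beta integral B(3/4, 1/2); the functional equation of
  Gamma then yields J m = - Gamma(m - 1/4) / (4 sqrt pi Gamma(m + 5/4)).
\<close>

lemma sin_mult_sin_nat:
  fixes j k :: nat and t :: real
  shows "sin (real j * t) * sin (real k * t)
       = (cos (\<bar>real j - real k\<bar> * t) - cos (real (j + k) * t)) / 2"
proof -
  have "cos (\<bar>real j - real k\<bar> * t) = cos (real j * t - real k * t)"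
    by (cases "real j \<le> real k")
       (simp_all add: left_diff_distrib flip: cos_minus[of "real j * t - real k * t"])
  then show ?thesis by (simp add: sin_times_sin distrib_right)
qed

lemma cos_minus_cos_eq_sum_sin:
  fixes m d :: nat and t :: real
  shows "cos (real m * t) - cos (real (m + d) * t)
       = 2 * sin (t / 2) * (\<Sum>l = m + 1..m + d. sin ((2 * real l - 1) * t / 2))"
proof (induction d)
  case (Suc d)
  have "cos (real (m + d) * t) - cos (real (m + Suc d) * t)
      = 2 * sin (t / 2) * sin ((2 * real (m + Suc d) - 1) * t / 2)"
    by (simp add: cos_diff_cos algebra_simps add_divide_distrib)
  with Suc.IH show ?case by (simp add: algebra_simps)
qed simp

lemma sin_mult_sin_eq_sin_half_sum:
  fixes j k :: nat and t :: real
  shows "sin (real j * t) * sin (real k * t)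
       = sin (t / 2) * (\<Sum>l = nat \<bar>int j - int k\<bar> + 1..j + k. sin ((2 * real l - 1) * t / 2))"
proof -
  define m where "m = nat \<bar>int j - int k\<bar>"
  have "\<bar>real j - real k\<bar> = real m" and "j + k = m + 2 * min j k"
    unfolding m_def by auto
  then show ?thesis
    unfolding sin_mult_sin_nat m_def[symmetric]
    by (simp add: cos_minus_cos_eq_sum_sin del: of_nat_add)
qed

lemma has_integral_sin_odd_half:
  fixes l :: nat
  shows "((\<lambda>x. sin ((2 * real l - 1) * pi * x / 2)) has_integral 2 / ((2 * real l - 1) * pi)) {0..1}"
proof -
  define c where "c = (2 * real l - 1) * pi / 2"
  have "2 * real l \<noteq> 1"
    by (metis dvd_triv_left odd_one of_nat_1 of_nat_eq_iff of_nat_mult of_nat_numeral)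
  then have "c \<noteq> 0" unfolding c_def by simp
  have "cos c = 0"
    unfolding c_def cos_zero_iff_int by (intro exI[of _ "2 * int l - 1"]) auto
  have "((\<lambda>x. sin (c * x)) has_integral (- cos (c * 1) / c) - (- cos (c * 0) / c)) {0..1}"
    by (rule fundamental_theorem_of_calculus)
       (use \<open>c \<noteq> 0\<close> in \<open>auto intro!: derivative_eq_intros
          simp flip: has_real_derivative_iff_has_vector_derivative\<close>)
  then show ?thesis using \<open>cos c = 0\<close> by (simp add: c_def mult_ac)
qed

lemma hN_minus_half:
  "hN (-1/2) j k = 1 / pi * (\<Sum>l = nat \<bar>int j - int k\<bar> + 1..j + k. 2 / (2 * real l - 1))"
proof -
  let ?L = "{nat \<bar>int j - int k\<bar> + 1..j + k}"
  have "((\<lambda>x. \<Sum>l\<in>?L. sin ((2 * real l - 1) * pi * x / 2))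
      has_integral (\<Sum>l\<in>?L. 2 / ((2 * real l - 1) * pi))) {0..1}"
    by (intro has_integral_sum has_integral_sin_odd_half) simp
  then have "((\<lambda>x. sin (pi * x / 2) powr (2 * (-1/2)) * sin (real j * pi * x) * sin (real k * pi * x))
      has_integral (\<Sum>l\<in>?L. 2 / ((2 * real l - 1) * pi))) {0..1}"
  proof (rule has_integral_eq[rotated])
    fix x :: real assume "x \<in> {0..1}"
    show "(\<Sum>l\<in>?L. sin ((2 * real l - 1) * pi * x / 2))
        = sin (pi * x / 2) powr (2 * (-1/2)) * sin (real j * pi * x) * sin (real k * pi * x)"
    proof (cases "x = 0")
      case False
      with \<open>x \<in> {0..1}\<close> have "sin (pi * x / 2) > 0"
        by (intro sin_gt_zero) auto
      then show ?thesis
        using sin_mult_sin_eq_sin_half_sum[of j "pi * x" k] by (simp add: powr_minus_divide mult_ac)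
    qed simp
  qed
  then show ?thesis
    unfolding hN_def by (simp add: integral_unique sum_distrib_left mult_ac)
qed

lemma Digamma_half_integer_diff:
  fixes m M :: nat
  assumes "m \<le> M"
  shows "Digamma (real M + 1/2) - Digamma (real m + 1/2) = (\<Sum>l = m + 1..M. 2 / (2 * real l - 1))"
proof -
  have "Digamma (real M + 1/2) - Digamma (real m + 1/2)
      = (\<Sum>k<M. 2 / real (2 * k + 1)) - (\<Sum>k<m. 2 / real (2 * k + 1))"
    by (simp add: Digamma_half_integer)
  also have "\<dots> = (\<Sum>k = m..<M. 2 / real (2 * k + 1))"
    using assms by (simp add: lessThan_atLeast0 sum_diff_nat_ivl)
  also have "\<dots> = (\<Sum>l = m + 1..M. 2 / (2 * real l - 1))"
    by (rule sum.reindex_bij_witness[where i = "\<lambda>l. l - 1" and j = Suc]) auto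
  finally show ?thesis .
qed

lemma integral_subinterval_diff:
  fixes f :: "real \<Rightarrow> 'a::banach"
  assumes "f integrable_on {a..b}" "a \<le> c" "c \<le> d" "d \<le> b"
  shows "integral {c..d} f = integral {a..d} f - integral {a..c} f"
proof -
  have "f integrable_on {a..d}"
    using assms by (intro integrable_on_subinterval[OF assms(1)]) auto
  then have "integral {a..c} f + integral {c..d} f = integral {a..d} f"
    using assms by (intro Henstock_Kurzweil_Integration.integral_combine) auto
  then show ?thesis by (simp add: algebra_simps)
qed

lemma strict_mono_on_image_Icc:
  fixes g :: "'a::order \<Rightarrow> 'b::order"
  assumes "strict_mono_on {c..d} g"
  shows "g ` {c..d} \<subseteq> {g c..g d}"
proof (rule image_subsetI)
  fix x assume "x \<in> {c..d}"
  then show "g x \<in> {g c..g d}"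
    using strict_mono_on_leD[OF assms, of c x] strict_mono_on_leD[OF assms, of x d] by auto
qed

lemma has_integral_substitution_strict_mono:
  fixes f :: "real \<Rightarrow> 'a::euclidean_space" and g g' :: "real \<Rightarrow> real"
  assumes g_mono: "strict_mono_on {c..d} g" and "c \<le> d"
    and f_cont: "continuous_on {g c..g d} f"
    and g_deriv: "\<And>x. x \<in> {c..d} \<Longrightarrow> (g has_real_derivative g' x) (at x)"
  shows "((\<lambda>x. g' x *\<^sub>R f (g x)) has_integral integral {g c..g d} f) {c..d}"
proof (rule has_integral_substitution[OF \<open>c \<le> d\<close> _ strict_mono_on_image_Icc[OF g_mono] f_cont])
  show "g c \<le> g d"
    using \<open>c \<le> d\<close> by (auto intro: strict_mono_on_leD[OF g_mono])
  show "(g has_real_derivative g' x) (at x within {c..d})" if "x \<in> {c..d}" for x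
    using g_deriv[OF that] by (rule has_field_derivative_at_within)
qed

lemma continuous_on_Icc_endpoints_eq:
  fixes \<Phi> :: "real \<Rightarrow> 'a::t1_space"
  assumes "a < b" and "continuous_on {a..b} \<Phi>"
    and "\<And>x y. x \<in> {a<..<b} \<Longrightarrow> y \<in> {a<..<b} \<Longrightarrow> \<Phi> x = \<Phi> y"
  shows "\<Phi> a = \<Phi> b"
proof -
  have "\<Phi> x = \<Phi> ((a + b) / 2)" if "x \<in> closure {a<..<b}" for x
  proof (rule continuous_constant_on_closure[OF _ _ that])
    show "continuous_on (closure {a<..<b}) \<Phi>"
      using assms(1,2) by simp
    show "\<Phi> y = \<Phi> ((a + b) / 2)" if "y \<in> {a<..<b}" for y
      using assms(1) that by (intro assms(3)) auto
  qed
  moreover have "a \<in> closure {a<..<b}" "b \<in> closure {a<..<b}"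
    using assms(1) by simp_all
  ultimately show ?thesis
    by metis
qed

text \<open>
  The density f may be unbounded at the ends of [g a, g b], like the Beta density: substitute on
  compact subintervals and pass to the limit by continuity of both indefinite integrals.
\<close>

lemma has_integral_substitution_interior:
  fixes f :: "real \<Rightarrow> 'a::euclidean_space" and g g' :: "real \<Rightarrow> real"
  assumes "a < b" and g_mono: "strict_mono_on {a..b} g" and g_cont: "continuous_on {a..b} g"
    and f_cont: "continuous_on {g a<..<g b} f" and f_int: "f integrable_on {g a..g b}"
    and g_deriv: "\<And>x. x \<in> {a<..<b} \<Longrightarrow> (g has_real_derivative g' x) (at x)"
    and h_int: "(\<lambda>x. g' x *\<^sub>R f (g x)) integrable_on {a..b}"
  shows "((\<lambda>x. g' x *\<^sub>R f (g x)) has_integral integral {g a..g b} f) {a..b}"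
proof -
  define h where "h = (\<lambda>x. g' x *\<^sub>R f (g x))"
  define \<Phi> where "\<Phi> x = integral {g a..g x} f - integral {a..x} h" for x
  have "continuous_on {a..b} (\<lambda>x. integral {g a..g x} f)"
    by (rule continuous_on_compose2[OF indefinite_integral_continuous_1[OF f_int] g_cont
          strict_mono_on_image_Icc[OF g_mono]])
  moreover have "continuous_on {a..b} (\<lambda>x. integral {a..x} h)"
    using h_int unfolding h_def by (rule indefinite_integral_continuous_1)
  ultimately have \<Phi>_cont: "continuous_on {a..b} \<Phi>"
    unfolding \<Phi>_def by (rule continuous_on_diff)
  have \<Phi>_eq: "\<Phi> d = \<Phi> c" if "a < c" "c \<le> d" "d < b" for c d
  proof -
    have "g a < g c" "g d < g b" "g c \<le> g d"
      using that by (auto intro: strict_mono_onD[OF g_mono] strict_mono_on_leD[OF g_mono])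
    have "strict_mono_on {c..d} g"
      using that by (auto intro: monotone_on_subset[OF g_mono])
    moreover have "continuous_on {g c..g d} f"
      using \<open>g a < g c\<close> \<open>g d < g b\<close> by (auto intro: continuous_on_subset[OF f_cont])
    ultimately have "integral {c..d} h = integral {g c..g d} f"
      unfolding h_def using that
      by (intro integral_unique has_integral_substitution_strict_mono g_deriv) auto
    moreover have "integral {c..d} h = integral {a..d} h - integral {a..c} h"
      using that h_int unfolding h_def by (intro integral_subinterval_diff) auto
    moreover have "integral {g c..g d} f = integral {g a..g d} f - integral {g a..g c} f"
      by (rule integral_subinterval_diff[OF f_int]) (use \<open>g a < g c\<close> \<open>g c \<le> g d\<close> \<open>g d < g b\<close> in auto)
    ultimately show ?thesis
      unfolding \<Phi>_def by (simp add: algebra_simps)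
  qed
  have "\<Phi> a = \<Phi> b"
  proof (rule continuous_on_Icc_endpoints_eq[OF \<open>a < b\<close> \<Phi>_cont])
    fix x y assume "x \<in> {a<..<b}" "y \<in> {a<..<b}"
    then show "\<Phi> x = \<Phi> y"
      using \<Phi>_eq[of x y] \<Phi>_eq[of y x] by (metis greaterThanLessThan_iff nle_le)
  qed
  then have "integral {a..b} h = integral {g a..g b} f"
    unfolding \<Phi>_def by simp
  then show ?thesis
    using h_int unfolding h_def by (metis has_integral_integrable_integral)
qed

definition sqrt_sin_cos_coeff :: "nat \<Rightarrow> real" where
  "sqrt_sin_cos_coeff m = integral {0..1} (\<lambda>x. sqrt (sin (pi * x / 2)) * cos (real m * pi * x))"

lemma has_integral_sqrt_sin_cos_coeff:
  "((\<lambda>x. sqrt (sin (pi * x / 2)) * cos (real m * pi * x)) has_integral sqrt_sin_cos_coeff m) {0..1}"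
  unfolding sqrt_sin_cos_coeff_def
  by (intro integrable_integral integrable_continuous_interval) (auto intro!: continuous_intros)

lemma has_real_derivative_sin_sqrt_sin_cos:
  fixes m :: nat and x :: real
  assumes "sin (pi * x / 2) > 0"
  shows "((\<lambda>x. sin (pi * x / 2) * sqrt (sin (pi * x / 2)) * cos ((2 * real m + 1) * pi * x / 2))
     has_real_derivative pi / 2 * sqrt (sin (pi * x / 2))
       * ((real m + 5/4) * cos (real (Suc m) * pi * x) + (1/4 - real m) * cos (real m * pi * x))) (at x)"
proof -
  define s where "s = sin (pi * x / 2)"
  define c where "c = cos (pi * x / 2)"
  define u where "u = (2 * real m + 1) * pi * x / 2"
  have "s > 0" using assms unfolding s_def .
  have angles: "u + pi * x / 2 = real (Suc m) * pi * x" "u - pi * x / 2 = real m * pi * x"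
    unfolding u_def by (simp_all add: field_simps)
  have D: "((\<lambda>x. sin (pi * x / 2) * sqrt (sin (pi * x / 2)) * cos ((2 * real m + 1) * pi * x / 2))
     has_real_derivative (c * (pi / 2) * sqrt s + s * (c * (pi / 2) / (2 * sqrt s))) * cos u
       - s * sqrt s * (sin u * ((2 * real m + 1) * pi / 2))) (at x)"
    unfolding s_def c_def u_def using assms by (auto intro!: derivative_eq_intros simp: field_simps)
  have "(c * (pi / 2) * sqrt s + s * (c * (pi / 2) / (2 * sqrt s))) * cos u
       - s * sqrt s * (sin u * ((2 * real m + 1) * pi / 2))
     = pi / 2 * sqrt s * (3/2 * c * cos u - (2 * real m + 1) * s * sin u)"
    using \<open>s > 0\<close> by (simp add: field_simps)
  also have "\<dots> = pi / 2 * sqrt s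
       * ((real m + 5/4) * cos (real (Suc m) * pi * x) + (1/4 - real m) * cos (real m * pi * x))"
    unfolding angles[symmetric] s_def c_def cos_add cos_diff by (simp add: algebra_simps)
  finally show ?thesis
    unfolding s_def[symmetric] by (rule DERIV_cong[OF D])
qed

lemma sqrt_sin_cos_coeff_Suc:
  "(real m + 5/4) * sqrt_sin_cos_coeff (Suc m) = (real m - 1/4) * sqrt_sin_cos_coeff m"
proof -
  define G where "G = (\<lambda>x. sin (pi * x / 2) * sqrt (sin (pi * x / 2)) * cos ((2 * real m + 1) * pi * x / 2))"
  define G' where "G' = (\<lambda>x. pi / 2 * sqrt (sin (pi * x / 2))
       * ((real m + 5/4) * cos (real (Suc m) * pi * x) + (1/4 - real m) * cos (real m * pi * x)))"
  have "(G' has_integral G 1 - G 0) {0..1}"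
  proof (rule fundamental_theorem_of_calculus_interior)
    show "continuous_on {0..1} G"
      unfolding G_def by (auto intro!: continuous_intros)
    show "(G has_vector_derivative G' x) (at x)" if "x \<in> {0<..<1}" for x
      unfolding G_def G'_def has_real_derivative_iff_has_vector_derivative[symmetric]
      using that by (intro has_real_derivative_sin_sqrt_sin_cos sin_gt_zero) simp_all
  qed simp
  moreover have "G 1 = 0"
  proof -
    have "cos ((2 * real m + 1) * pi / 2) = 0"
      unfolding cos_zero_iff_int by (intro exI[of _ "2 * int m + 1"]) auto
    then show ?thesis
      unfolding G_def by simp
  qed
  moreover have "G 0 = 0"
    unfolding G_def by simp
  ultimately have "(G' has_integral 0) {0..1}"
    by simp
  moreover have "(G' has_integral pi / 2 * ((real m + 5/4) * sqrt_sin_cos_coeff (Suc m))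
      - pi / 2 * ((real m - 1/4) * sqrt_sin_cos_coeff m)) {0..1}"
  proof -
    have "G' = (\<lambda>x. pi / 2 * ((real m + 5/4) * (sqrt (sin (pi * x / 2)) * cos (real (Suc m) * pi * x)))
        - pi / 2 * ((real m - 1/4) * (sqrt (sin (pi * x / 2)) * cos (real m * pi * x))))"
      unfolding G'_def by (simp add: fun_eq_iff algebra_simps)
    then show ?thesis
      by (simp only:) (intro has_integral_diff has_integral_mult_right has_integral_sqrt_sin_cos_coeff)
  qed
  ultimately have "0 = pi / 2 * ((real m + 5/4) * sqrt_sin_cos_coeff (Suc m))
      - pi / 2 * ((real m - 1/4) * sqrt_sin_cos_coeff m)"
    by (rule has_integral_unique)
  then show ?thesis
    by simp
qed

lemma strict_mono_on_sin_half_squared: "strict_mono_on {0..1} (\<lambda>x::real. sin (pi * x / 2) ^ 2)"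
proof (rule strict_mono_onI)
  fix x y :: real assume "x \<in> {0..1}" "y \<in> {0..1}" "x < y"
  then have "0 \<le> pi * x / 2" "pi * x / 2 < pi * y / 2" "pi * y / 2 \<le> pi / 2"
    by auto
  then have "sin (pi * x / 2) < sin (pi * y / 2)" "0 \<le> sin (pi * x / 2)"
    using pi_gt_zero by (intro sin_monotone_2pi sin_ge_zero; linarith)+
  then show "sin (pi * x / 2) ^ 2 < sin (pi * y / 2) ^ 2"
    by (rule power_strict_mono) simp
qed

lemma sin_half_squared_Beta_integrand:
  fixes x :: real
  assumes "0 \<le> x" "x < 1"
  shows "pi * sin (pi * x / 2) * cos (pi * x / 2)
       * ((sin (pi * x / 2) ^ 2) powr (-1/4) * (1 - sin (pi * x / 2) ^ 2) powr (-1/2))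
     = pi * sqrt (sin (pi * x / 2))"
proof (cases "x = 0")
  case False
  define s where "s = sin (pi * x / 2)"
  define c where "c = cos (pi * x / 2)"
  have "s > 0" "c > 0"
    unfolding s_def c_def using assms False by (auto intro!: sin_gt_zero cos_gt_zero)
  have "(s ^ 2) powr (-1/4) * (1 - s ^ 2) powr (-1/2) = (s ^ 2) powr (-1/4) * (c ^ 2) powr (-1/2)"
    unfolding s_def c_def by (simp add: cos_squared_eq)
  also have "\<dots> = s powr (-1/2) * c powr (-1)"
    using powr_powr[of s 2 "-1/4"] powr_powr[of c 2 "-1/2"] \<open>s > 0\<close> \<open>c > 0\<close> by simp
  also have "\<dots> = 1 / (sqrt s * c)"
    using \<open>s > 0\<close> \<open>c > 0\<close> by (simp add: powr_minus_divide powr_half_sqrt)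
  finally have "pi * s * c * ((s ^ 2) powr (-1/4) * (1 - s ^ 2) powr (-1/2)) = pi * s * c / (sqrt s * c)"
    by simp
  also have "\<dots> = pi * sqrt s"
    using \<open>s > 0\<close> \<open>c > 0\<close> by (simp add: field_simps flip: power2_eq_square)
  finally show ?thesis
    unfolding s_def c_def .
qed simp

lemma sqrt_sin_cos_coeff_0_Beta: "pi * sqrt_sin_cos_coeff 0 = Beta (3/4) (1/2)"
proof -
  define g where "g = (\<lambda>x::real. sin (pi * x / 2) ^ 2)"
  define g' where "g' = (\<lambda>x::real. pi * sin (pi * x / 2) * cos (pi * x / 2))"
  define f where "f = (\<lambda>t::real. t powr (-1/4) * (1 - t) powr (-1/2))"
  have "g 0 = 0" "g 1 = 1"
    unfolding g_def by simp_all
  have f_Beta: "(f has_integral Beta (3/4) (1/2)) {0..1}"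
    using has_integral_Beta_real[of "3/4" "1/2"] unfolding f_def by simp
  have h_eq: "g' x *\<^sub>R f (g x) = pi * sqrt (sin (pi * x / 2))" if "x \<in> {0..1} - {1}" for x
    unfolding g_def g'_def f_def real_scaleR_def using that
    by (intro sin_half_squared_Beta_integrand) auto
  have sqrt_sin: "((\<lambda>x. pi * sqrt (sin (pi * x / 2))) has_integral pi * sqrt_sin_cos_coeff 0) {0..1}"
    using has_integral_mult_right[OF has_integral_sqrt_sin_cos_coeff[of 0], of pi] by simp
  have "strict_mono_on {0..1} g"
    unfolding g_def by (rule strict_mono_on_sin_half_squared)
  moreover have "continuous_on {0..1} g"
    unfolding g_def by (auto intro!: continuous_intros)
  moreover have "continuous_on {g 0<..<g 1} f"
    unfolding f_def \<open>g 0 = 0\<close> \<open>g 1 = 1\<close> by (auto intro!: continuous_intros)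
  moreover have "f integrable_on {g 0..g 1}"
    using f_Beta unfolding \<open>g 0 = 0\<close> \<open>g 1 = 1\<close> by (rule has_integral_integrable)
  moreover have "(g has_real_derivative g' x) (at x)" for x
    unfolding g_def g'_def by (auto intro!: derivative_eq_intros)
  moreover have "(\<lambda>x. g' x *\<^sub>R f (g x)) integrable_on {0..1}"
    by (rule integrable_spike_finite[where S = "{1}", OF _ h_eq has_integral_integrable[OF sqrt_sin]]) simp
  ultimately have "((\<lambda>x. g' x *\<^sub>R f (g x)) has_integral integral {g 0..g 1} f) {0..1}"
    by (intro has_integral_substitution_interior) auto
  moreover have "((\<lambda>x. g' x *\<^sub>R f (g x)) has_integral pi * sqrt_sin_cos_coeff 0) {0..1}"
    by (rule has_integral_spike_finite[where S = "{1}", OF _ h_eq sqrt_sin]) simp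
  ultimately have "integral {g 0..g 1} f = pi * sqrt_sin_cos_coeff 0"
    by (rule has_integral_unique)
  then show ?thesis
    using integral_unique[OF f_Beta] unfolding \<open>g 0 = 0\<close> \<open>g 1 = 1\<close> by simp
qed

lemma of_nat_minus_quarter_notin_nonpos_Ints: "real m - 1/4 \<notin> \<int>\<^sub>\<le>\<^sub>0"
proof
  assume "real m - 1/4 \<in> \<int>\<^sub>\<le>\<^sub>0"
  then obtain n where "real m - 1/4 = - real n"
    by (auto elim!: nonpos_Ints_cases')
  then have "real (4 * m + 4 * n) = 1"
    by simp
  then have "4 * m + 4 * n = 1"
    by linarith
  then show False
    by presburger
qed

lemma sqrt_sin_cos_coeff_eq:
  "sqrt_sin_cos_coeff m = - Gamma (real m - 1/4) / (4 * sqrt pi * Gamma (real m + 5/4))"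
proof (induction m)
  case 0
  have "sqrt_sin_cos_coeff 0 = Beta (3/4) (1/2) / pi"
    using sqrt_sin_cos_coeff_0_Beta by (simp add: field_simps)
  also have "\<dots> = Gamma (3/4) / (Gamma (5/4) * (pi / sqrt pi))"
    unfolding Beta_def by (simp add: Gamma_one_half_real)
  also have "pi / sqrt pi = sqrt pi"
    by (simp add: real_div_sqrt)
  also have "Gamma (3/4 :: real) = - 1/4 * Gamma (- 1/4)"
    using Gamma_plus1[OF of_nat_minus_quarter_notin_nonpos_Ints[of 0]] by simp
  finally show ?case
    by simp
next
  case (Suc m)
  have "real m + 5/4 \<notin> \<int>\<^sub>\<le>\<^sub>0"
    using nonpos_Ints_nonpos by force
  from Gamma_plus1[OF this]
  have Gamma_plus: "Gamma (real (Suc m) + 5/4) = (real m + 5/4) * Gamma (real m + 5/4)"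
    by (simp add: algebra_simps)
  have Gamma_minus: "Gamma (real (Suc m) - 1/4) = (real m - 1/4) * Gamma (real m - 1/4)"
    using Gamma_plus1[OF of_nat_minus_quarter_notin_nonpos_Ints] by (simp add: algebra_simps)
  have "real m + 5/4 > 0"
    by (simp add: add_pos_nonneg)
  then have "sqrt_sin_cos_coeff (Suc m) = (real m - 1/4) / (real m + 5/4) * sqrt_sin_cos_coeff m"
    using sqrt_sin_cos_coeff_Suc[of m] by (simp add: field_simps)
  also have "\<dots> = - ((real m - 1/4) * Gamma (real m - 1/4))
      / (4 * sqrt pi * ((real m + 5/4) * Gamma (real m + 5/4)))"
    unfolding Suc.IH by (simp add: field_simps)
  finally show ?case
    unfolding Gamma_plus Gamma_minus .
qed

lemma hN_quarter:
  "hN (1/4) j k = 1 / (2 * sqrt (2 * pi)) *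
     (Gamma (real (j + k) - 1/4) / Gamma (real (j + k) + 5/4)
      - Gamma (\<bar>real j - real k\<bar> - 1/4) / Gamma (\<bar>real j - real k\<bar> + 5/4))"
proof -
  define m where "m = nat \<bar>int j - int k\<bar>"
  have m: "\<bar>real j - real k\<bar> = real m"
    unfolding m_def by simp
  have integrand: "sin (pi * x / 2) powr (2 * (1/4)) * sin (real j * pi * x) * sin (real k * pi * x)
      = 1/2 * (sqrt (sin (pi * x / 2)) * cos (real m * pi * x))
        - 1/2 * (sqrt (sin (pi * x / 2)) * cos (real (j + k) * pi * x))" if "x \<in> {0..1}" for x
  proof -
    have "sin (pi * x / 2) \<ge> 0"
      using that by (intro sin_ge_zero) auto
    then have "sin (pi * x / 2) powr (2 * (1/4)) * sin (real j * pi * x) * sin (real k * pi * x)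
        = sqrt (sin (pi * x / 2)) * (sin (real j * pi * x) * sin (real k * pi * x))"
      by (simp add: powr_half_sqrt mult.assoc)
    also have "sin (real j * pi * x) * sin (real k * pi * x)
        = (cos (real m * pi * x) - cos (real (j + k) * pi * x)) / 2"
      using sin_mult_sin_nat[of j "pi * x" k] unfolding m by (simp add: mult.assoc)
    finally show ?thesis
      by (simp add: algebra_simps)
  qed
  have "integral {0..1} (\<lambda>x. sin (pi * x / 2) powr (2 * (1/4)) * sin (real j * pi * x) * sin (real k * pi * x))
      = integral {0..1} (\<lambda>x. 1/2 * (sqrt (sin (pi * x / 2)) * cos (real m * pi * x))
        - 1/2 * (sqrt (sin (pi * x / 2)) * cos (real (j + k) * pi * x)))"
    by (rule integral_cong) (rule integrand)
  also have "\<dots> = 1/2 * sqrt_sin_cos_coeff m - 1/2 * sqrt_sin_cos_coeff (j + k)"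
    by (intro integral_unique has_integral_diff has_integral_mult_right has_integral_sqrt_sin_cos_coeff)
  finally have "hN (1/4) j k = 2 powr (3/2) * (1/2 * sqrt_sin_cos_coeff m - 1/2 * sqrt_sin_cos_coeff (j + k))"
    unfolding hN_def by simp
  also have "(2::real) powr (3/2) = 2 * sqrt 2"
    using powr_add[of "2::real" 1 "1/2"] by (simp add: powr_half_sqrt)
  also have "sqrt 2 = 2 * sqrt pi / sqrt (2 * pi)"
    by (simp add: real_sqrt_mult field_simps)
  finally show ?thesis
    unfolding sqrt_sin_cos_coeff_eq m by (simp add: field_simps)
qed

theorem lemmaB1:
  fixes n j k :: nat
  assumes "j \<in> {1..n}" and "k \<in> {1..n}"
  shows "(hN (1/4) j k =
           1 / (2 * sqrt (2 * pi)) *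
             (Gamma (real (j + k) - 1/4) / Gamma (real (j + k) + 5/4)
              - Gamma (\<bar>real j - real k\<bar> - 1/4) / Gamma (\<bar>real j - real k\<bar> + 5/4))) \<and>
         (hN (-1/2) j k =
           1 / pi * (Digamma (real (j + k) + 1/2) - Digamma (\<bar>real j - real k\<bar> + 1/2))) \<and>
         (1 / pi * (Digamma (real (j + k) + 1/2) - Digamma (\<bar>real j - real k\<bar> + 1/2)) =
           1 / pi * (\<Sum>l = nat \<bar>int j - int k\<bar> + 1 .. j + k. 2 / (2 * real l - 1)))"
proof -
  \<comment> \<open>The identities hold for all j and k.\<close>
  have "Digamma (real (j + k) + 1/2) - Digamma (\<bar>real j - real k\<bar> + 1/2)
      = (\<Sum>l = nat \<bar>int j - int k\<bar> + 1 .. j + k. 2 / (2 * real l - 1))"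
    using Digamma_half_integer_diff[of "nat \<bar>int j - int k\<bar>" "j + k"] by simp
  then show ?thesis
    using hN_quarter[of j k] hN_minus_half[of j k] by simp
qed

end
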